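(* Let $e'>2$ be an integer and $S=\{0\}\cup(e'+\mathbb N)$. Then the conductor of $S$ is $c'=e'$, and \[ \delta^2_S(c'+e'-2)=3,\qquad \delta^2_S(c'+e'-1)=4. \]
   Context: The conductor of a numerical semigroup $S$ is the least integer $c$ with $c+\mathbb N\subseteq S$. $D_S(x)=\{s\in S:x-s\in S\}$ and $\delta^2_S(m)=\min\{|D_S(m_1)\cup D_S(m_2)|: m\le m_1<m_2,\ m_1,m_2\in S\}$. *)

theory Defs
  imports Main
begin

definition conductor :: "nat set \<Rightarrow> nat" where
  "conductor S = (LEAST c. \<forall>n. c + n \<in> S)"

text \<open>D_S(x) = {s in S : x - s in S}; with natural numbers this requires s \<le> x.\<close>
definition Dset :: "nat set \<Rightarrow> nat \<Rightarrow> nat set" where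
  "Dset S x = {s \<in> S. s \<le> x \<and> x - s \<in> S}"

definition delta2 :: "nat set \<Rightarrow> nat \<Rightarrow> nat" where
  "delta2 S m = (LEAST k. \<exists>m1 m2. m \<le> m1 \<and> m1 < m2 \<and> m1 \<in> S \<and> m2 \<in> S
                     \<and> k = card (Dset S m1 \<union> Dset S m2))"

end

theory Submission
  imports Defs
begin

text \<open>Any two admissible elements \<open>m\<^sub>1 < m\<^sub>2\<close> give at least the three elements \<open>0, m\<^sub>1, m\<^sub>2\<close>
  of \<open>D(m\<^sub>1) \<union> D(m\<^sub>2)\<close>, and this is attained just below \<open>2e\<close>, where \<open>D(x) = {0, x}\<close>.
  From \<open>2e - 1\<close> on, the larger element is at least \<open>2e\<close>, so \<open>e\<close> is a fourth element,
  attained by the pair \<open>2e - 1, 2e\<close>.\<close>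

lemma finite_Dset: "finite (Dset S x)"
  unfolding Dset_def by auto

lemma Dset_union_supset:
  assumes "0 \<in> S" "m1 \<in> S" "m2 \<in> S"
  shows "{0, m1, m2} \<subseteq> Dset S m1 \<union> Dset S m2"
  using assms unfolding Dset_def by auto

lemma conductor_eqI:
  assumes "\<forall>n. c + n \<in> S" and "c - 1 \<notin> S"
  shows "conductor S = c"
  unfolding conductor_def
proof (rule Least_equality)
  fix d assume d: "\<forall>n. d + n \<in> S"
  show "c \<le> d"
  proof (rule ccontr)
    assume "\<not> c \<le> d"
    then have "d + (c - 1 - d) = c - 1" by simp
    then show False using d \<open>c - 1 \<notin> S\<close> by metis
  qed
qed (use assms in simp)

lemma delta2_eqI:
  assumes "m \<le> m1" "m1 < m2" "m1 \<in> S" "m2 \<in> S"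
    and "card (Dset S m1 \<union> Dset S m2) = k"
    and "\<And>n1 n2. m \<le> n1 \<Longrightarrow> n1 < n2 \<Longrightarrow> n1 \<in> S \<Longrightarrow> n2 \<in> S
           \<Longrightarrow> k \<le> card (Dset S n1 \<union> Dset S n2)"
  shows "delta2 S m = k"
  unfolding delta2_def
  by (rule Least_equality) (use assms in fastforce)+

definition ordinary_semigroup :: "nat \<Rightarrow> nat set" where
  "ordinary_semigroup e = {0} \<union> {n. e \<le> n}"

lemma conductor_ordinary_semigroup:
  "1 < e \<Longrightarrow> conductor (ordinary_semigroup e) = e"
  by (rule conductor_eqI) (auto simp: ordinary_semigroup_def)

lemma Dset_ordinary_semigroup_below_double:
  assumes "e \<le> x" "x < 2 * e"
  shows "Dset (ordinary_semigroup e) x = {0, x}"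
  using assms unfolding Dset_def ordinary_semigroup_def by auto

lemma multiplicity_in_Dset_ordinary_semigroup:
  "2 * e \<le> x \<Longrightarrow> e \<in> Dset (ordinary_semigroup e) x"
  unfolding Dset_def ordinary_semigroup_def by auto

lemma delta2_ordinary_semigroup_double_minus_2:
  assumes "1 < e"
  shows "delta2 (ordinary_semigroup e) (2 * e - 2) = 3"
proof (rule delta2_eqI)
  let ?S = "ordinary_semigroup e"
  show "card (Dset ?S (2 * e - 2) \<union> Dset ?S (2 * e - 1)) = 3"
    using assms by (simp add: Dset_ordinary_semigroup_below_double insert_commute)
  fix n1 n2 assume n: "2 * e - 2 \<le> n1" "n1 < n2" "n1 \<in> ?S" "n2 \<in> ?S"
  have "{0, n1, n2} \<subseteq> Dset ?S n1 \<union> Dset ?S n2"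
    using n by (intro Dset_union_supset) (auto simp: ordinary_semigroup_def)
  then have "card {0, n1, n2} \<le> card (Dset ?S n1 \<union> Dset ?S n2)"
    by (simp add: card_mono finite_Dset)
  moreover have "card {0, n1, n2} = 3" using n assms by auto
  ultimately show "3 \<le> card (Dset ?S n1 \<union> Dset ?S n2)" by simp
qed (use assms in \<open>auto simp: ordinary_semigroup_def\<close>)

lemma delta2_ordinary_semigroup_double_minus_1:
  assumes "1 < e"
  shows "delta2 (ordinary_semigroup e) (2 * e - 1) = 4"
proof (rule delta2_eqI)
  let ?S = "ordinary_semigroup e"
  have "Dset ?S (2 * e) = {0, e, 2 * e}"
    unfolding Dset_def ordinary_semigroup_def by auto
  then show "card (Dset ?S (2 * e - 1) \<union> Dset ?S (2 * e)) = 4"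
    using assms by (simp add: Dset_ordinary_semigroup_below_double insert_commute)
  fix n1 n2 assume n: "2 * e - 1 \<le> n1" "n1 < n2" "n1 \<in> ?S" "n2 \<in> ?S"
  have "{0, n1, n2} \<subseteq> Dset ?S n1 \<union> Dset ?S n2"
    using n by (intro Dset_union_supset) (auto simp: ordinary_semigroup_def)
  moreover have "e \<in> Dset ?S n2"
    using n by (intro multiplicity_in_Dset_ordinary_semigroup) simp
  ultimately have "card {0, e, n1, n2} \<le> card (Dset ?S n1 \<union> Dset ?S n2)"
    by (simp add: card_mono finite_Dset)
  moreover have "e < n1" using n assms by linarith
  then have "card {0, e, n1, n2} = 4" using n assms by simp
  ultimately show "4 \<le> card (Dset ?S n1 \<union> Dset ?S n2)" by simp
qed (use assms in \<open>auto simp: ordinary_semigroup_def\<close>)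

theorem lemma4p9:
  fixes e' :: nat and S :: "nat set"
  assumes "e' > 2"
    and "S = {0} \<union> {n. e' \<le> n}"
  shows "conductor S = e'
    \<and> delta2 S (conductor S + e' - 2) = 3
    \<and> delta2 S (conductor S + e' - 1) = 4"
proof -
  have S: "S = ordinary_semigroup e'"
    using assms(2) by (simp add: ordinary_semigroup_def)
  have "1 < e'" using assms(1) by simp
  have conductor: "conductor S = e'"
    using \<open>1 < e'\<close> by (simp add: S conductor_ordinary_semigroup)
  show ?thesis
    unfolding conductor
    using S delta2_ordinary_semigroup_double_minus_2[OF \<open>1 < e'\<close>]
      delta2_ordinary_semigroup_double_minus_1[OF \<open>1 < e'\<close>]
    by (simp add: mult_2)
qed

end
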